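(* Let $r>0$, $\kappa>0$, $\tau>0$, $p\in[0,1]$ with $\varepsilon=pe^{-\tau}<1$, and let $q\in\mathbb{R}$. Let $H:\mathcal{C}\to\mathbb{R}$, \[ H(\phi)=1-\phi_S(0)-\phi_I(-\kappa)+\int_{-\kappa}^{0}\big(1-r\phi_S(s)\big)\phi_I(s)\,ds, \] and $\mathcal{F}_q:=H^{-1}(q)$. Then: (1) $\mathcal{F}_q\cap\mathcal{E}_0=\{\widehat{u(q)}\}$, where $u(q)=(1-q,0,q)$. (2) $\mathcal{F}_q\cap\mathcal{E}_I=\{\widehat{v(q)}\}$, where $v(q)=(v_S,v_I(q),v_Q(q))$ with $v_S=\frac{1}{r(1-\varepsilon)}$, \[ v_I(q)=\frac{1-\varepsilon}{1-\varepsilon+\varepsilon\kappa}(q_c-q),\qquad v_Q(q)=\frac{\varepsilon\kappa}{1-\varepsilon+\varepsilon\kappa}(q_c-q)+q, \] and $q_c=1-\frac{1}{r}\frac{1}{1-\varepsilon}$.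
   Context: $\mathcal{C}=\{\phi\in C([-\tau-\kappa,0],\mathbb{R}^3):\phi_S+\phi_I+\phi_Q\equiv1\}$, the phase space of the SIQ delay system $\dot S=-rSI+I+r\varepsilon (SI)(t-\tau-\kappa)$, $\dot I=rSI-I-r\varepsilon(SI)(t-\tau)$, $\dot Q=r\varepsilon[(SI)(t-\tau)-(SI)(t-\tau-\kappa)]$. For $u\in\mathbb{R}^3$ with $u_1+u_2+u_3=1$, $\hat u$ is the constant function with value $u$. $\mathcal{E}_0=\{\hat\phi\in\mathcal{C}\text{ constant}:\phi_I=0\}$ (disease-free equilibria) and $\mathcal{E}_I=\{\hat\phi\in\mathcal{C}\text{ constant}:\phi_S=\frac{1}{r(1-\varepsilon)}\}$. *)

theory Defs
  imports "HOL-Analysis.Analysis"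
begin

text \<open>A point of the state space R^3 is a triple (S, I, Q).
  Elements of the phase space are functions on [-tau-kappa, 0],
  represented extensionally: they are (0,0,0) outside that interval.\<close>

definition cS :: "real \<times> real \<times> real \<Rightarrow> real" where "cS u = fst u"
definition cI :: "real \<times> real \<times> real \<Rightarrow> real" where "cI u = fst (snd u)"
definition cQ :: "real \<times> real \<times> real \<Rightarrow> real" where "cQ u = snd (snd u)"

definition Cspace :: "real \<Rightarrow> real \<Rightarrow> (real \<Rightarrow> real \<times> real \<times> real) set" where
  "Cspace \<tau> \<kappa> = {\<phi>. continuous_on {-\<tau>-\<kappa>..0} \<phi>
      \<and> (\<forall>t\<in>{-\<tau>-\<kappa>..0}. cS (\<phi> t) + cI (\<phi> t) + cQ (\<phi> t) = 1)
      \<and> (\<forall>t. t \<notin> {-\<tau>-\<kappa>..0} \<longrightarrow> \<phi> t = (0,0,0))}"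

definition hat :: "real \<Rightarrow> real \<Rightarrow> real \<times> real \<times> real \<Rightarrow> (real \<Rightarrow> real \<times> real \<times> real)" where
  "hat \<tau> \<kappa> u = (\<lambda>t. if t \<in> {-\<tau>-\<kappa>..0} then u else (0,0,0))"

definition E0 :: "real \<Rightarrow> real \<Rightarrow> (real \<Rightarrow> real \<times> real \<times> real) set" where
  "E0 \<tau> \<kappa> = {hat \<tau> \<kappa> u | u. cS u + cI u + cQ u = 1 \<and> cI u = 0}"

definition EI :: "real \<Rightarrow> real \<Rightarrow> real \<Rightarrow> real \<Rightarrow> (real \<Rightarrow> real \<times> real \<times> real) set" where
  "EI r \<epsilon> \<tau> \<kappa> = {hat \<tau> \<kappa> u | u. cS u + cI u + cQ u = 1 \<and> cS u = 1 / (r * (1 - \<epsilon>))}"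

definition H :: "real \<Rightarrow> real \<Rightarrow> (real \<Rightarrow> real \<times> real \<times> real) \<Rightarrow> real" where
  "H r \<kappa> \<phi> = 1 - cS (\<phi> 0) - cI (\<phi> (-\<kappa>))
      + integral {-\<kappa>..0} (\<lambda>s. (1 - r * cS (\<phi> s)) * cI (\<phi> s))"

definition Fq :: "real \<Rightarrow> real \<Rightarrow> real \<Rightarrow> real \<Rightarrow> (real \<Rightarrow> real \<times> real \<times> real) set" where
  "Fq r \<tau> \<kappa> q = {\<phi> \<in> Cspace \<tau> \<kappa>. H r \<kappa> \<phi> = q}"

end

theory Submission
  imports Defs
begin

text \<open>On a constant function the integrand of H is constant, so H becomes a polynomial in the
  equilibrium value, and each intersection is the solution set of a linear system: on E0 the
  integral term vanishes, and on EI the coefficient 1 - r vS equals -\<epsilon>/(1 - \<epsilon>), which makes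
  the level equation linear in the I-component with slope -(1 - \<epsilon> + \<epsilon> \<kappa>)/(1 - \<epsilon>).\<close>

definition H_const :: "real \<Rightarrow> real \<Rightarrow> real \<times> real \<times> real \<Rightarrow> real" where
  "H_const r \<kappa> u = 1 - cS u - cI u + \<kappa> * ((1 - r * cS u) * cI u)"

lemma hat_in_Cspace:
  assumes "cS u + cI u + cQ u = 1"
  shows "hat \<tau> \<kappa> u \<in> Cspace \<tau> \<kappa>"
proof -
  have "continuous_on {-\<tau>-\<kappa>..0} (hat \<tau> \<kappa> u)"
    by (rule continuous_on_cong[THEN iffD2, OF refl, of _ _ "\<lambda>_. u"]) (auto simp: hat_def)
  then show ?thesis
    using assms unfolding Cspace_def hat_def by auto
qed

lemma H_hat:
  assumes "\<kappa> > 0" "\<tau> \<ge> 0"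
  shows "H r \<kappa> (hat \<tau> \<kappa> u) = H_const r \<kappa> u"
proof -
  have "integral {-\<kappa>..0} (\<lambda>s. (1 - r * cS (hat \<tau> \<kappa> u s)) * cI (hat \<tau> \<kappa> u s))
      = integral {-\<kappa>..0} (\<lambda>s. (1 - r * cS u) * cI u)"
    by (rule integral_cong) (use assms in \<open>auto simp: hat_def\<close>)
  also have "\<dots> = \<kappa> * ((1 - r * cS u) * cI u)"
    using assms by simp
  finally show ?thesis
    using assms unfolding H_def H_const_def by (simp add: hat_def)
qed

lemma Fq_inter_constants:
  assumes "\<kappa> > 0" "\<tau> \<ge> 0" and "\<And>u. P u \<Longrightarrow> cS u + cI u + cQ u = 1"
  shows "Fq r \<tau> \<kappa> q \<inter> {hat \<tau> \<kappa> u | u. P u} = hat \<tau> \<kappa> ` {u. P u \<and> H_const r \<kappa> u = q}"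
  using assms hat_in_Cspace H_hat[OF assms(1,2)] unfolding Fq_def by auto

lemma disease_free_level:
  "{u. cS u + cI u + cQ u = 1 \<and> cI u = 0 \<and> H_const r \<kappa> u = q} = {(1 - q, 0, q)}"
  by (auto simp: H_const_def cS_def cI_def cQ_def)

lemma endemic_level:
  fixes r \<epsilon> \<kappa> q :: real
  defines "qc \<equiv> 1 - (1 / r) * (1 / (1 - \<epsilon>))"
    and "D \<equiv> 1 - \<epsilon> + \<epsilon> * \<kappa>"
  assumes r: "r \<noteq> 0" and \<epsilon>: "\<epsilon> \<noteq> 1" and D: "D \<noteq> 0"
  shows "{u. cS u + cI u + cQ u = 1 \<and> cS u = 1 / (r * (1 - \<epsilon>)) \<and> H_const r \<kappa> u = q}
    = {(1 / (r * (1 - \<epsilon>)), (1 - \<epsilon>) / D * (qc - q), (\<epsilon> * \<kappa>) / D * (qc - q) + q)}"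
proof -
  define vS where "vS = 1 / (r * (1 - \<epsilon>))"
  have level: "H_const r \<kappa> (vS, b, c) = qc - b * D / (1 - \<epsilon>)" for b c
  proof -
    have "1 - r * vS = - \<epsilon> / (1 - \<epsilon>)"
      unfolding vS_def using r \<epsilon> by (simp add: field_simps)
    moreover have "qc = 1 - vS"
      unfolding qc_def vS_def by simp
    moreover have "b * D / (1 - \<epsilon>) = b + \<kappa> * (\<epsilon> / (1 - \<epsilon>) * b)"
      unfolding D_def using \<epsilon> by (simp add: field_simps)
    ultimately show ?thesis
      by (simp add: H_const_def cS_def cI_def)
  qed
  have solve_I: "qc - b * D / (1 - \<epsilon>) = q \<longleftrightarrow> b = (1 - \<epsilon>) / D * (qc - q)" for b
    using \<epsilon> D by (auto simp: field_simps)
  have solve_Q: "vS + (1 - \<epsilon>) / D * (qc - q) + c = 1 \<longleftrightarrow> c = (\<epsilon> * \<kappa>) / D * (qc - q) + q" for c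
  proof -
    have "(1 - \<epsilon>) / D * (qc - q) + (\<epsilon> * \<kappa>) / D * (qc - q) = (1 - \<epsilon> + \<epsilon> * \<kappa>) / D * (qc - q)"
      by (simp add: add_divide_distrib distrib_right)
    then have "(1 - \<epsilon>) / D * (qc - q) + (\<epsilon> * \<kappa>) / D * (qc - q) = qc - q"
      using D unfolding D_def by simp
    moreover have "vS = 1 - qc"
      unfolding qc_def vS_def by simp
    ultimately show ?thesis
      by linarith
  qed
  have solution: "a + b + c = 1 \<and> a = vS \<and> H_const r \<kappa> (a, b, c) = q
      \<longleftrightarrow> (a, b, c) = (vS, (1 - \<epsilon>) / D * (qc - q), (\<epsilon> * \<kappa>) / D * (qc - q) + q)" for a b c
    using level[of b c] solve_I[of b] solve_Q[of c] by auto
  show ?thesis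
  proof (rule set_eqI)
    fix u :: "real \<times> real \<times> real"
    obtain a b c where "u = (a, b, c)"
      by (cases u)
    then show "u \<in> {u. cS u + cI u + cQ u = 1 \<and> cS u = 1 / (r * (1 - \<epsilon>)) \<and> H_const r \<kappa> u = q}
      \<longleftrightarrow> u \<in> {(1 / (r * (1 - \<epsilon>)), (1 - \<epsilon>) / D * (qc - q), (\<epsilon> * \<kappa>) / D * (qc - q) + q)}"
      using solution[of a b c] unfolding vS_def by (simp add: cS_def cI_def cQ_def)
  qed
qed

theorem theorem7:
  fixes r \<kappa> \<tau> p q \<epsilon> :: real
  assumes "r > 0" and "\<kappa> > 0" and "\<tau> > 0" and "0 \<le> p" and "p \<le> 1"
    and "\<epsilon> = p * exp (- \<tau>)" and "\<epsilon> < 1"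
  shows "Fq r \<tau> \<kappa> q \<inter> E0 \<tau> \<kappa> = {hat \<tau> \<kappa> (1 - q, 0, q)}
    \<and> (let qc = 1 - (1 / r) * (1 / (1 - \<epsilon>));
           vS = 1 / (r * (1 - \<epsilon>));
           vI = (1 - \<epsilon>) / (1 - \<epsilon> + \<epsilon> * \<kappa>) * (qc - q);
           vQ = (\<epsilon> * \<kappa>) / (1 - \<epsilon> + \<epsilon> * \<kappa>) * (qc - q) + q
       in Fq r \<tau> \<kappa> q \<inter> EI r \<epsilon> \<tau> \<kappa> = {hat \<tau> \<kappa> (vS, vI, vQ)})"
proof -
  have "\<tau> \<ge> 0" using assms by simp
  have "\<epsilon> * \<kappa> \<ge> 0" using assms by simp
  then have D: "1 - \<epsilon> + \<epsilon> * \<kappa> \<noteq> 0" using assms by linarith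
  have "Fq r \<tau> \<kappa> q \<inter> E0 \<tau> \<kappa>
      = hat \<tau> \<kappa> ` {u. (cS u + cI u + cQ u = 1 \<and> cI u = 0) \<and> H_const r \<kappa> u = q}"
    unfolding E0_def by (rule Fq_inter_constants) (use \<open>\<kappa> > 0\<close> \<open>\<tau> \<ge> 0\<close> in auto)
  moreover have "Fq r \<tau> \<kappa> q \<inter> EI r \<epsilon> \<tau> \<kappa> = hat \<tau> \<kappa> `
      {u. (cS u + cI u + cQ u = 1 \<and> cS u = 1 / (r * (1 - \<epsilon>))) \<and> H_const r \<kappa> u = q}"
    unfolding EI_def by (rule Fq_inter_constants) (use \<open>\<kappa> > 0\<close> \<open>\<tau> \<ge> 0\<close> in auto)
  ultimately show ?thesis
    using disease_free_level endemic_level[of r \<epsilon> \<kappa> q] D \<open>r > 0\<close> \<open>\<epsilon> < 1\<close>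
    by (simp add: Let_def conj_assoc)
qed

end
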